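(* Let $\delta,\kappa,a,\alpha>0$ and $\varphi\in(-\pi/2,\pi/2)$, and put $d=2\pi\delta$, $\gamma=[-d,d]$, $\Gamma=\kappa\cos\varphi$, $q_0=\dfrac{2\pi\delta\kappa}{\cos\varphi}$. Let $\varepsilon^{(L)}:\gamma\to\mathbb{R}$ be continuous with $1<\varepsilon^{(L)}(z)\le E$ for all $z\in\gamma$, where $E=\max_{z\in\gamma}\varepsilon^{(L)}(z)>1$. Assume $$(E-1)q_0<1,\qquad \alpha<\alpha_0:=\frac{4}{27}\,\frac{1}{a^2}\,\frac{\bigl[1-(E-1)q_0\bigr]^3}{q_0}.$$ Then the cubic polynomial $P_K(p)=\alpha q_0p^3-\bigl(1-(E-1)q_0\bigr)p+a$ has two positive zeros $p_1<p_2$. Let $p\in(p_1,p_2)$ be such that $$t_0:=q_0\bigl(E-1+3\alpha p^2\bigr)<1,$$ and assume moreover $0<\alpha<\min\{\alpha_0,\alpha_1\}$ with $\alpha_1=\frac13\bigl\{q_0\,[1-(E-1)q_0]\bigr\}^{-1}$. Then the operator $T$ maps the closed ball $\bar S_p=\{U\in C(\gamma):\|U\|\le p\}$ into itself and is a contraction there: $\|T(U)-T(V)\|\le t_0\|U-V\|$ for all $U,V\in\bar S_p$.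
   Context: $C(\gamma)$ denotes the Banach space of continuous complex-valued functions on $\gamma$ with norm $\|U\|=\max_{z\in\gamma}|U(z)|$. The operator $T:C(\gamma)\to C(\gamma)$ is $$T(U)(z)=a\,e^{-i\Gamma(z-d)}-\frac{i\kappa^2}{2\Gamma}\int_{-d}^{d}e^{i\Gamma|z-z_0|}\Bigl[1-\varepsilon^{(L)}(z_0)-\alpha|U(z_0)|^2\Bigr]U(z_0)\,dz_0 ,$$ so that fixed points of $T$ are exactly the solutions of the nonlinear integral equation $$U(z)+\frac{i\kappa^2}{2\Gamma}\int_{-d}^{d}e^{i\Gamma|z-z_0|}\Bigl[1-\bigl(\varepsilon^{(L)}(z_0)+\alpha|U(z_0)|^2\bigr)\Bigr]U(z_0)\,dz_0=a\,e^{-i\Gamma(z-d)},\quad z\in\gamma \qquad(\ast)$$ (the integral equation for the field in a Kerr-nonlinear dielectric layer of thickness $4\pi\delta$ illuminated by a plane wave of amplitude $a$ at incidence angle $\varphi$). *)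

theory Defs
  imports "HOL-Analysis.Analysis"
begin

text \<open>Elements of C(gamma), gamma = [-d,d], are represented as functions real => complex,
  continuous on gamma; only their values on gamma matter.\<close>

definition supnorm :: "real \<Rightarrow> (real \<Rightarrow> complex) \<Rightarrow> real" where
  "supnorm d U = Sup ((\<lambda>z. cmod (U z)) ` {-d..d})"

definition closed_ball_C :: "real \<Rightarrow> real \<Rightarrow> (real \<Rightarrow> complex) set" where
  "closed_ball_C d p = {U. continuous_on {-d..d} U \<and> supnorm d U \<le> p}"

definition T_op :: "real \<Rightarrow> real \<Rightarrow> real \<Rightarrow> real \<Rightarrow> (real \<Rightarrow> real) \<Rightarrow> real
     \<Rightarrow> (real \<Rightarrow> complex) \<Rightarrow> real \<Rightarrow> complex" where
  "T_op a \<Gamma> \<kappa> d epsL \<alpha> U z =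
     complex_of_real a * exp (- \<i> * complex_of_real (\<Gamma> * (z - d)))
     - (\<i> * complex_of_real (\<kappa>\<^sup>2 / (2 * \<Gamma>))) *
       integral {-d..d} (\<lambda>z0. exp (\<i> * complex_of_real (\<Gamma> * \<bar>z - z0\<bar>)) *
          complex_of_real (1 - epsL z0 - \<alpha> * (cmod (U z0))\<^sup>2) * U z0)"

end

theory Submission
  imports Defs
begin

(* Write T(U)(z) = a e^{-i\<Gamma>(z-d)} - i C \<cdot> G(f(U))(z), where C = \<kappa>\<^sup>2/(2\<Gamma>),
   G h (z) = \<integral>_{-d}^{d} e^{i\<Gamma>|z-z0|} h(z0) dz0 is the Green integral operator and
   f(U)(z0) = (1 - \<epsilon>(z0) - \<alpha>|U(z0)|\<^sup>2) U(z0) is the Kerr nonlinearity.  Since the kernel has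
   modulus one, |G h| \<le> 2d \<cdot> max|h|, and C \<cdot> 2d = q0.  On the ball |u| \<le> p the Kerr term
   is bounded by (E-1+\<alpha>p\<^sup>2)p and Lipschitz with constant E-1+3\<alpha>p\<^sup>2.  Hence T maps the
   ball of radius p into itself as soon as a + q0(E-1+\<alpha>p\<^sup>2)p \<le> p, i.e. P_K(p) \<le> 0, and is
   Lipschitz there with constant q0(E-1+3\<alpha>p\<^sup>2). *)

section \<open>The cubic \<open>A p\<^sup>3 - c p + a\<close>\<close>

(* At the critical point ps = sqrt(c/(3A)) the cubic is negative under the
   discriminant condition; this produces the two positive roots by the intermediate value theorem. *)
lemma cubic_negative_at_critical_point:
  fixes A c a :: real
  assumes A: "A > 0" and c: "c > 0" and cond: "27 * A * a\<^sup>2 < 4 * c ^ 3"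
  defines "ps \<equiv> sqrt (c / (3 * A))"
  shows "A * ps ^ 3 - c * ps + a < 0"
proof -
  have ps0: "ps > 0" unfolding ps_def using A c by simp
  have ps2: "ps\<^sup>2 = c / (3 * A)" unfolding ps_def using A c by simp
  have Aps: "A * ps ^ 3 = c * ps / 3"
  proof -
    have "A * ps ^ 3 = A * ps\<^sup>2 * ps" by (simp add: power2_eq_square power3_eq_cube)
    then show ?thesis using ps2 A by (simp add: field_simps)
  qed
  have "(2 * c * ps / 3)\<^sup>2 = 4 * c\<^sup>2 * ps\<^sup>2 / 9" by (simp add: power2_eq_square)
  also have "\<dots> = 4 * c ^ 3 / (27 * A)"
    unfolding ps2 using A by (simp add: field_simps power2_eq_square power3_eq_cube)
  finally have "(2 * c * ps / 3)\<^sup>2 = 4 * c ^ 3 / (27 * A)" .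
  moreover have "a\<^sup>2 < 4 * c ^ 3 / (27 * A)" using cond A by (simp add: field_simps)
  ultimately have "a\<^sup>2 < (2 * c * ps / 3)\<^sup>2" by simp
  then have "a < 2 * c * ps / 3"
    by (rule power_less_imp_less_base) (use ps0 c in simp)
  then show ?thesis using Aps by simp
qed

lemma cubic_factorization:
  fixes A c a p1 p2 p :: real
  assumes r1: "A * p1 ^ 3 - c * p1 + a = 0" and r2: "A * p2 ^ 3 - c * p2 + a = 0"
    and ne: "p1 \<noteq> p2"
  shows "A * p ^ 3 - c * p + a = A * (p - p1) * (p - p2) * (p + p1 + p2)"
proof -
  have "(p1 - p2) * (A * (p1\<^sup>2 + p1 * p2 + p2\<^sup>2) - c) = 0"
    using r1 r2 by (simp add: algebra_simps power2_eq_square power3_eq_cube)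
  then have sym: "A * (p1\<^sup>2 + p1 * p2 + p2\<^sup>2) = c" using ne by simp
  have "A * (p - p1) * (p - p2) * (p + p1 + p2)
      = A * p ^ 3 - A * (p1\<^sup>2 + p1 * p2 + p2\<^sup>2) * p + (A * (p1\<^sup>2 + p1 * p2 + p2\<^sup>2) * p1 - A * p1 ^ 3)"
    by (simp add: algebra_simps power2_eq_square power3_eq_cube)
  also have "\<dots> = A * p ^ 3 - c * p + a" unfolding sym using r1 by simp
  finally show ?thesis by simp
qed

(* Roots p1 \<in> (0,ps) and p2 \<in> (ps,2ps) come from the intermediate value theorem (P(0) = a > 0,
   P(2ps) > 0); the factorization shows there are no other positive roots and P < 0 between. *)
lemma cubic_two_positive_roots:
  fixes A c a :: real
  assumes A: "A > 0" and c: "c > 0" and a: "a > 0" and cond: "27 * A * a\<^sup>2 < 4 * c ^ 3"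
  defines "P \<equiv> (\<lambda>p. A * p ^ 3 - c * p + a)"
  shows "\<exists>p1 p2. 0 < p1 \<and> p1 < p2 \<and> P p1 = 0 \<and> P p2 = 0 \<and>
           (\<forall>p>0. P p = 0 \<longrightarrow> p = p1 \<or> p = p2) \<and> (\<forall>p. p1 < p \<and> p < p2 \<longrightarrow> P p < 0)"
proof -
  define ps where "ps = sqrt (c / (3 * A))"
  have ps0: "ps > 0" unfolding ps_def using A c by simp
  have Pps: "P ps < 0"
    unfolding P_def ps_def using cubic_negative_at_critical_point[OF A c cond] by simp
  have P2: "P (2 * ps) > 0"
  proof -
    have "ps\<^sup>2 = c / (3 * A)" unfolding ps_def using A c by simp
    then have "4 * A * ps\<^sup>2 - c = c / 3" using A by (simp add: field_simps)
    moreover have "P (2 * ps) = 2 * ps * (4 * A * ps\<^sup>2 - c) + a"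
      unfolding P_def by (simp add: algebra_simps power2_eq_square power3_eq_cube)
    ultimately have "P (2 * ps) = 2 * ps * (c / 3) + a" by simp
    then show ?thesis using ps0 c a by (simp add: add_pos_pos)
  qed
  have cont: "continuous_on S P" for S unfolding P_def by (intro continuous_intros)
  have P0: "P 0 = a" unfolding P_def by simp
  obtain p1 where p1: "0 \<le> p1" "p1 \<le> ps" "P p1 = 0"
    using IVT2'[of P ps 0 0] cont Pps a ps0 P0 by fastforce
  obtain p2 where p2: "ps \<le> p2" "p2 \<le> 2 * ps" "P p2 = 0"
    using IVT'[of P ps 0 "2*ps"] cont Pps P2 ps0 by fastforce
  have "p1 \<noteq> 0" "p1 \<noteq> ps" "p2 \<noteq> ps" using p1 p2 Pps a P0 by auto
  then have order: "0 < p1" "p1 < p2" using p1 p2 by auto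
  have factored: "P p = A * (p - p1) * (p - p2) * (p + p1 + p2)" for p
    using cubic_factorization[of A p1 c a p2 p] p1(3) p2(3) order unfolding P_def by simp
  show ?thesis
  proof (intro exI conjI allI impI)
    show "0 < p1" "p1 < p2" "P p1 = 0" "P p2 = 0" using order p1 p2 by simp_all
  next
    fix p :: real assume "p > 0" "P p = 0"
    then show "p = p1 \<or> p = p2" unfolding factored using A order by auto
  next
    fix p :: real assume "p1 < p \<and> p < p2"
    then show "P p < 0" unfolding factored using A order by (intro mult_neg_pos mult_pos_neg) auto
  qed
qed

section \<open>The sup norm on \<open>C([-d,d])\<close>\<close>

lemma supnorm_le:
  assumes "d \<ge> 0" "\<And>z. z \<in> {-d..d} \<Longrightarrow> cmod (U z) \<le> B"
  shows "supnorm d U \<le> B"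
  unfolding supnorm_def using assms by (intro cSup_least) auto

lemma continuous_le_Sup_image:
  fixes f :: "'a::topological_space \<Rightarrow> real"
  assumes "compact S" "continuous_on S f" "z \<in> S"
  shows "f z \<le> Sup (f ` S)"
proof -
  have "bdd_above (f ` S)"
    by (intro bounded_imp_bdd_above compact_imp_bounded compact_continuous_image assms)
  then show ?thesis using assms(3) by (intro cSup_upper) auto
qed

lemma supnorm_ge:
  assumes "continuous_on {-d..d} U" "z \<in> {-d..d}"
  shows "cmod (U z) \<le> supnorm d U"
  unfolding supnorm_def using assms by (intro continuous_le_Sup_image continuous_intros) auto

lemma mem_closed_ball_C_iff:
  assumes "d \<ge> 0"
  shows "U \<in> closed_ball_C d p \<longleftrightarrow> continuous_on {-d..d} U \<and> (\<forall>z\<in>{-d..d}. cmod (U z) \<le> p)"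
proof
  assume "U \<in> closed_ball_C d p"
  then show "continuous_on {-d..d} U \<and> (\<forall>z\<in>{-d..d}. cmod (U z) \<le> p)"
    unfolding closed_ball_C_def using supnorm_ge order_trans by blast
next
  assume "continuous_on {-d..d} U \<and> (\<forall>z\<in>{-d..d}. cmod (U z) \<le> p)"
  then show "U \<in> closed_ball_C d p" unfolding closed_ball_C_def using supnorm_le[OF assms] by auto
qed

section \<open>The Green integral operator\<close>

definition green_int :: "real \<Rightarrow> real \<Rightarrow> (real \<Rightarrow> complex) \<Rightarrow> real \<Rightarrow> complex" where
  "green_int \<Gamma> d h z = integral {-d..d} (\<lambda>z0. exp (\<i> * complex_of_real (\<Gamma> * \<bar>z - z0\<bar>)) * h z0)"

lemma green_integrand_integrable:
  assumes "continuous_on {-d..d} h"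
  shows "(\<lambda>z0. exp (\<i> * complex_of_real (\<Gamma> * \<bar>z - z0\<bar>)) * h z0) integrable_on {-d..d}"
  by (intro integrable_continuous_interval continuous_intros assms)

(* The kernel has modulus one, so G is bounded by the length of the interval. *)
lemma green_int_norm_le:
  assumes "continuous_on {-d..d} h" "d \<ge> 0" "\<And>z0. z0 \<in> {-d..d} \<Longrightarrow> cmod (h z0) \<le> B"
  shows "cmod (green_int \<Gamma> d h z) \<le> 2 * d * B"
proof -
  have "cmod (green_int \<Gamma> d h z) \<le> integral {-d..d} (\<lambda>_. B)"
    unfolding green_int_def
    by (intro integral_norm_bound_integral green_integrand_integrable assms)
       (auto simp: integrable_const_ivl norm_mult norm_exp_i_times assms(3))
  also have "\<dots> = 2 * d * B" using assms(2) by simp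
  finally show ?thesis .
qed

(* The kernel is jointly continuous, hence G h is continuous. *)
lemma green_int_continuous:
  assumes "continuous_on {-d..d} h"
  shows "continuous_on S (green_int \<Gamma> d h)"
proof -
  have h2: "continuous_on (S \<times> {-d..d}) (\<lambda>x. h (snd x))"
    by (rule continuous_on_compose2[OF assms]) (auto intro: continuous_intros)
  have "continuous_on (S \<times> cbox (-d) d) (\<lambda>(z, z0). exp (\<i> * complex_of_real (\<Gamma> * \<bar>z - z0\<bar>)) * h z0)"
    unfolding split_beta cbox_interval by (intro continuous_intros h2)
  from integral_continuous_on_param[OF this] show ?thesis
    by (simp add: cbox_interval green_int_def[abs_def])
qed

lemma green_int_diff:
  assumes "continuous_on {-d..d} h" "continuous_on {-d..d} k"
  shows "green_int \<Gamma> d h z - green_int \<Gamma> d k z = green_int \<Gamma> d (\<lambda>z0. h z0 - k z0) z"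
  unfolding green_int_def
  using integral_diff[OF green_integrand_integrable[OF assms(1)] green_integrand_integrable[OF assms(2)]]
  by (simp add: algebra_simps)

section \<open>The Kerr nonlinearity\<close>

definition kerr :: "real \<Rightarrow> real \<Rightarrow> complex \<Rightarrow> complex" where
  "kerr e \<alpha> u = complex_of_real (1 - e - \<alpha> * (cmod u)\<^sup>2) * u"

lemma cubic_term_lipschitz:
  fixes u v :: complex
  assumes "cmod u \<le> p" "cmod v \<le> p"
  shows "cmod (complex_of_real ((cmod u)\<^sup>2) * u - complex_of_real ((cmod v)\<^sup>2) * v) \<le> 3 * p\<^sup>2 * cmod (u - v)"
proof -
  let ?x = "cmod u" and ?y = "cmod v" and ?w = "cmod (u - v)"
  have split: "complex_of_real (?x\<^sup>2) * u - complex_of_real (?y\<^sup>2) * v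
     = complex_of_real (?x\<^sup>2) * (u - v) + complex_of_real ((?x - ?y) * (?x + ?y)) * v"
    by (simp add: algebra_simps power2_eq_square)
  have "\<bar>?x - ?y\<bar> \<le> ?w" by (rule norm_triangle_ineq3)
  then have second: "\<bar>?x - ?y\<bar> * (?x + ?y) * ?y \<le> ?w * (?x + ?y) * ?y"
    by (intro mult_right_mono) auto
  have first_norm: "cmod (complex_of_real (?x\<^sup>2) * (u - v)) = ?x\<^sup>2 * ?w"
    by (simp only: norm_mult norm_of_real) simp
  have second_norm: "cmod (complex_of_real ((?x - ?y) * (?x + ?y)) * v) = \<bar>?x - ?y\<bar> * (?x + ?y) * ?y"
    by (simp only: norm_mult norm_of_real abs_mult) simp
  have "cmod (complex_of_real (?x\<^sup>2) * u - complex_of_real (?y\<^sup>2) * v)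
      \<le> ?x\<^sup>2 * ?w + \<bar>?x - ?y\<bar> * (?x + ?y) * ?y"
    unfolding split first_norm[symmetric] second_norm[symmetric] by (rule norm_triangle_ineq)
  also have "\<dots> \<le> ?w * (?x\<^sup>2 + ?x * ?y + ?y\<^sup>2)"
    using second by (simp add: algebra_simps power2_eq_square)
  also have "\<dots> \<le> ?w * (3 * p\<^sup>2)"
  proof (rule mult_left_mono)
    have p0: "0 \<le> p" using assms(1) norm_ge_zero order_trans by blast
    have "?x\<^sup>2 \<le> p\<^sup>2" "?y\<^sup>2 \<le> p\<^sup>2" "?x * ?y \<le> p * p"
      using power_mono[OF assms(1) norm_ge_zero] power_mono[OF assms(2) norm_ge_zero]
        mult_mono[OF assms p0 norm_ge_zero] by auto
    then show "?x\<^sup>2 + ?x * ?y + ?y\<^sup>2 \<le> 3 * p\<^sup>2" by (simp add: power2_eq_square)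
  qed simp
  finally show ?thesis by (simp add: mult.commute)
qed

lemma kerr_lipschitz:
  assumes "cmod u \<le> p" "cmod v \<le> p" "1 \<le> e" "e \<le> E" "\<alpha> \<ge> 0"
  shows "cmod (kerr e \<alpha> u - kerr e \<alpha> v) \<le> (E - 1 + 3 * \<alpha> * p\<^sup>2) * cmod (u - v)"
proof -
  have split: "kerr e \<alpha> u - kerr e \<alpha> v = complex_of_real (1 - e) * (u - v)
      - complex_of_real \<alpha> * (complex_of_real ((cmod u)\<^sup>2) * u - complex_of_real ((cmod v)\<^sup>2) * v)"
    unfolding kerr_def by (simp add: algebra_simps)
  have "cmod (complex_of_real (1 - e)) \<le> E - 1"
    by (simp only: norm_of_real) (use assms in simp)
  then have linear: "cmod (complex_of_real (1 - e) * (u - v)) \<le> (E - 1) * cmod (u - v)"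
    by (simp only: norm_mult) (simp add: mult_right_mono)
  have cubic: "cmod (complex_of_real \<alpha> * (complex_of_real ((cmod u)\<^sup>2) * u - complex_of_real ((cmod v)\<^sup>2) * v))
      \<le> \<alpha> * (3 * p\<^sup>2 * cmod (u - v))"
    using assms cubic_term_lipschitz[OF assms(1,2)] by (simp add: norm_mult mult_left_mono)
  have "cmod (kerr e \<alpha> u - kerr e \<alpha> v) \<le> (E - 1) * cmod (u - v) + \<alpha> * (3 * p\<^sup>2 * cmod (u - v))"
    unfolding split by (intro order_trans[OF norm_triangle_ineq4] add_mono linear cubic)
  then show ?thesis by (simp add: algebra_simps)
qed

lemma kerr_norm_le:
  assumes "cmod u \<le> p" "1 \<le> e" "e \<le> E" "\<alpha> \<ge> 0"
  shows "cmod (kerr e \<alpha> u) \<le> (E - 1 + \<alpha> * p\<^sup>2) * p"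
proof -
  have "0 \<le> \<alpha> * (cmod u)\<^sup>2" using assms by simp
  then have "\<bar>1 - e - \<alpha> * (cmod u)\<^sup>2\<bar> = e - 1 + \<alpha> * (cmod u)\<^sup>2"
    using assms by linarith
  then have "cmod (kerr e \<alpha> u) = (e - 1 + \<alpha> * (cmod u)\<^sup>2) * cmod u"
    unfolding kerr_def by (simp only: norm_mult norm_of_real)
  also have "\<dots> \<le> (E - 1 + \<alpha> * p\<^sup>2) * p"
    using assms by (intro mult_mono add_mono mult_left_mono power_mono) auto
  finally show ?thesis .
qed

section \<open>Estimates for the operator \<open>T\<close>\<close>

lemma T_op_green:
  "T_op a \<Gamma> \<kappa> d epsL \<alpha> U z = complex_of_real a * exp (- \<i> * complex_of_real (\<Gamma> * (z - d)))
     - (\<i> * complex_of_real (\<kappa>\<^sup>2 / (2 * \<Gamma>))) * green_int \<Gamma> d (\<lambda>z0. kerr (epsL z0) \<alpha> (U z0)) z"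
  unfolding T_op_def green_int_def kerr_def by (simp only: mult.assoc)

lemma kerr_continuous:
  assumes "continuous_on {-d..d} epsL" "continuous_on {-d..d} U"
  shows "continuous_on {-d..d} (\<lambda>z0. kerr (epsL z0) \<alpha> (U z0))"
  unfolding kerr_def by (intro continuous_intros assms)

lemma norm_plane_wave: "cmod (complex_of_real a * exp (- \<i> * complex_of_real x)) = \<bar>a\<bar>"
  by (simp add: norm_mult norm_exp_eq_Re)

lemma norm_i_times_real: "cmod (\<i> * complex_of_real x) = \<bar>x\<bar>"
  by (simp add: norm_mult)

(* Self-mapping: the incident wave has modulus |a| and the integral term is at most
   (\<kappa>\<^sup>2/(2\<Gamma>))\<cdot>2d\<cdot>max|f(U)|, so the ball is invariant under the stated inequality. *)
lemma T_op_maps_ball: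
  assumes "\<Gamma> > 0" "d \<ge> 0" "continuous_on {-d..d} epsL"
    and eps: "\<And>z. z \<in> {-d..d} \<Longrightarrow> 1 \<le> epsL z \<and> epsL z \<le> E" and "\<alpha> \<ge> 0"
    and small: "\<bar>a\<bar> + \<kappa>\<^sup>2 * d / \<Gamma> * ((E - 1 + \<alpha> * p\<^sup>2) * p) \<le> p"
    and U: "U \<in> closed_ball_C d p"
  shows "T_op a \<Gamma> \<kappa> d epsL \<alpha> U \<in> closed_ball_C d p"
proof -
  let ?f = "\<lambda>z0. kerr (epsL z0) \<alpha> (U z0)"
  have Uc: "continuous_on {-d..d} U" and Ub: "\<And>z. z \<in> {-d..d} \<Longrightarrow> cmod (U z) \<le> p"
    using U mem_closed_ball_C_iff[OF \<open>d \<ge> 0\<close>] by auto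
  have fc: "continuous_on {-d..d} ?f" by (rule kerr_continuous[OF assms(3) Uc])
  have fb: "cmod (?f z0) \<le> (E - 1 + \<alpha> * p\<^sup>2) * p" if "z0 \<in> {-d..d}" for z0
    using kerr_norm_le[OF Ub[OF that] _ _ \<open>\<alpha> \<ge> 0\<close>] eps[OF that] by blast
  have "cmod (T_op a \<Gamma> \<kappa> d epsL \<alpha> U z) \<le> p" for z
  proof -
    have "cmod (T_op a \<Gamma> \<kappa> d epsL \<alpha> U z)
        \<le> cmod (complex_of_real a * exp (- \<i> * complex_of_real (\<Gamma> * (z - d))))
          + cmod (\<i> * complex_of_real (\<kappa>\<^sup>2 / (2 * \<Gamma>))) * cmod (green_int \<Gamma> d ?f z)"
      unfolding T_op_green norm_mult[symmetric] by (rule norm_triangle_ineq4)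
    also have "\<dots> = \<bar>a\<bar> + \<kappa>\<^sup>2 / (2 * \<Gamma>) * cmod (green_int \<Gamma> d ?f z)"
      unfolding norm_plane_wave norm_i_times_real using \<open>\<Gamma> > 0\<close> by simp
    also have "\<dots> \<le> \<bar>a\<bar> + \<kappa>\<^sup>2 / (2 * \<Gamma>) * (2 * d * ((E - 1 + \<alpha> * p\<^sup>2) * p))"
      using green_int_norm_le[OF fc \<open>d \<ge> 0\<close> fb] \<open>\<Gamma> > 0\<close>
      by (intro add_left_mono mult_left_mono) auto
    also have "\<dots> \<le> p" using small \<open>\<Gamma> > 0\<close> by (simp add: field_simps)
    finally show ?thesis .
  qed
  moreover have "continuous_on {-d..d} (T_op a \<Gamma> \<kappa> d epsL \<alpha> U)"
    unfolding T_op_green[abs_def] by (intro continuous_intros green_int_continuous fc)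
  ultimately show ?thesis using mem_closed_ball_C_iff[OF \<open>d \<ge> 0\<close>] by auto
qed

(* Lipschitz estimate: the incident wave cancels, and the Kerr term is
   (E-1+3\<alpha>p\<^sup>2)-Lipschitz on the ball. *)
lemma T_op_lipschitz:
  assumes "\<Gamma> > 0" "d \<ge> 0" "continuous_on {-d..d} epsL"
    and eps: "\<And>z. z \<in> {-d..d} \<Longrightarrow> 1 \<le> epsL z \<and> epsL z \<le> E" and "\<alpha> \<ge> 0"
    and U: "U \<in> closed_ball_C d p" and V: "V \<in> closed_ball_C d p"
  shows "supnorm d (\<lambda>z. T_op a \<Gamma> \<kappa> d epsL \<alpha> U z - T_op a \<Gamma> \<kappa> d epsL \<alpha> V z)
           \<le> \<kappa>\<^sup>2 * d / \<Gamma> * (E - 1 + 3 * \<alpha> * p\<^sup>2) * supnorm d (\<lambda>z. U z - V z)"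
proof -
  let ?L = "E - 1 + 3 * \<alpha> * p\<^sup>2" and ?S = "supnorm d (\<lambda>z. U z - V z)"
  let ?f = "\<lambda>z0. kerr (epsL z0) \<alpha> (U z0)" and ?g = "\<lambda>z0. kerr (epsL z0) \<alpha> (V z0)"
  have Uc: "continuous_on {-d..d} U" and Ub: "\<And>z. z \<in> {-d..d} \<Longrightarrow> cmod (U z) \<le> p"
    using U mem_closed_ball_C_iff[OF \<open>d \<ge> 0\<close>] by auto
  have Vc: "continuous_on {-d..d} V" and Vb: "\<And>z. z \<in> {-d..d} \<Longrightarrow> cmod (V z) \<le> p"
    using V mem_closed_ball_C_iff[OF \<open>d \<ge> 0\<close>] by auto
  have fc: "continuous_on {-d..d} ?f" and gc: "continuous_on {-d..d} ?g"
    using kerr_continuous[OF assms(3)] Uc Vc by auto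
  then have dc: "continuous_on {-d..d} (\<lambda>z0. ?f z0 - ?g z0)" by (intro continuous_intros)
  have diff_bound: "cmod (?f z0 - ?g z0) \<le> ?L * ?S" if "z0 \<in> {-d..d}" for z0
  proof -
    have "cmod (?f z0 - ?g z0) \<le> ?L * cmod (U z0 - V z0)"
      using kerr_lipschitz[OF Ub[OF that] Vb[OF that] _ _ \<open>\<alpha> \<ge> 0\<close>] eps[OF that] by blast
    also have "\<dots> \<le> ?L * ?S"
      using supnorm_ge[of d "\<lambda>z. U z - V z", OF _ that] Uc Vc eps[OF that] \<open>\<alpha> \<ge> 0\<close>
      by (intro mult_left_mono) (auto intro: continuous_intros)
    finally show ?thesis .
  qed
  have "cmod (T_op a \<Gamma> \<kappa> d epsL \<alpha> U z - T_op a \<Gamma> \<kappa> d epsL \<alpha> V z) \<le> \<kappa>\<^sup>2 * d / \<Gamma> * ?L * ?S" for z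
  proof -
    have eq: "T_op a \<Gamma> \<kappa> d epsL \<alpha> U z - T_op a \<Gamma> \<kappa> d epsL \<alpha> V z
        = - ((\<i> * complex_of_real (\<kappa>\<^sup>2 / (2 * \<Gamma>))) * green_int \<Gamma> d (\<lambda>z0. ?f z0 - ?g z0) z)"
      unfolding T_op_green green_int_diff[OF fc gc, symmetric] by (simp add: algebra_simps)
    have "cmod (T_op a \<Gamma> \<kappa> d epsL \<alpha> U z - T_op a \<Gamma> \<kappa> d epsL \<alpha> V z)
        = \<kappa>\<^sup>2 / (2 * \<Gamma>) * cmod (green_int \<Gamma> d (\<lambda>z0. ?f z0 - ?g z0) z)"
      unfolding eq norm_minus_cancel norm_mult[of "\<i> * complex_of_real (\<kappa>\<^sup>2 / (2 * \<Gamma>))"] norm_i_times_real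
      using \<open>\<Gamma> > 0\<close> by simp
    also have "\<dots> \<le> \<kappa>\<^sup>2 / (2 * \<Gamma>) * (2 * d * (?L * ?S))"
      using green_int_norm_le[OF dc \<open>d \<ge> 0\<close> diff_bound] \<open>\<Gamma> > 0\<close> by (intro mult_left_mono) auto
    also have "\<dots> = \<kappa>\<^sup>2 * d / \<Gamma> * ?L * ?S" using \<open>\<Gamma> > 0\<close> by (simp add: field_simps)
    finally show ?thesis .
  qed
  then show ?thesis using \<open>d \<ge> 0\<close> by (intro supnorm_le) auto
qed

theorem theorem1:
  fixes \<delta> \<kappa> a \<alpha> \<phi> E :: real and epsL :: "real \<Rightarrow> real"
  defines "d \<equiv> 2 * pi * \<delta>"
  defines "\<Gamma> \<equiv> \<kappa> * cos \<phi>"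
  defines "q0 \<equiv> 2 * pi * \<delta> * \<kappa> / cos \<phi>"
  defines "PK \<equiv> (\<lambda>p::real. \<alpha> * q0 * p ^ 3 - (1 - (E - 1) * q0) * p + a)"
  defines "\<alpha>0 \<equiv> 4 / 27 * (1 / a\<^sup>2) * (1 - (E - 1) * q0) ^ 3 / q0"
  defines "\<alpha>1 \<equiv> 1 / 3 * inverse (q0 * (1 - (E - 1) * q0))"
  assumes "\<delta> > 0" and "\<kappa> > 0" and "a > 0" and "\<alpha> > 0"
    and "- (pi / 2) < \<phi>" and "\<phi> < pi / 2"
    and "continuous_on {-d..d} epsL"
    and "\<forall>z\<in>{-d..d}. 1 < epsL z"
    and "E = Sup (epsL ` {-d..d})"
    and "(E - 1) * q0 < 1"
    and "\<alpha> < \<alpha>0" and "\<alpha> < \<alpha>1"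
  shows "\<exists>p1 p2. 0 < p1 \<and> p1 < p2 \<and> PK p1 = 0 \<and> PK p2 = 0 \<and>
           (\<forall>p>0. PK p = 0 \<longrightarrow> p = p1 \<or> p = p2) \<and>
           (\<forall>p. p1 < p \<and> p < p2 \<and> q0 * (E - 1 + 3 * \<alpha> * p\<^sup>2) < 1 \<longrightarrow>
              (\<forall>U\<in>closed_ball_C d p. T_op a \<Gamma> \<kappa> d epsL \<alpha> U \<in> closed_ball_C d p) \<and>
              (\<forall>U\<in>closed_ball_C d p. \<forall>V\<in>closed_ball_C d p.
                 supnorm d (\<lambda>z. T_op a \<Gamma> \<kappa> d epsL \<alpha> U z - T_op a \<Gamma> \<kappa> d epsL \<alpha> V z)
                 \<le> q0 * (E - 1 + 3 * \<alpha> * p\<^sup>2) * supnorm d (\<lambda>z. U z - V z)))"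
proof -
  have "cos \<phi> > 0" using assms by (intro cos_gt_zero_pi) auto
  then have "d \<ge> 0" "\<Gamma> > 0" "q0 > 0"
    unfolding d_def \<Gamma>_def q0_def using assms by auto
  have q0_eq: "q0 = \<kappa>\<^sup>2 * d / \<Gamma>"
    unfolding q0_def d_def \<Gamma>_def using \<open>cos \<phi> > 0\<close> \<open>\<kappa> > 0\<close> by (simp add: power2_eq_square)
  have eps: "1 \<le> epsL z \<and> epsL z \<le> E" if "z \<in> {-d..d}" for z
    using assms that continuous_le_Sup_image[of "{-d..d}" epsL z] by force
  define c where "c = 1 - (E - 1) * q0"
  have "c > 0" unfolding c_def using assms by simp
  have discriminant: "27 * (\<alpha> * q0) * a\<^sup>2 < 4 * c ^ 3"
    using \<open>\<alpha> < \<alpha>0\<close> \<open>a > 0\<close> \<open>q0 > 0\<close> unfolding \<alpha>0_def c_def by (simp add: field_simps)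
  obtain p1 p2 where roots: "0 < p1" "p1 < p2" "PK p1 = 0" "PK p2 = 0"
    "\<forall>p>0. PK p = 0 \<longrightarrow> p = p1 \<or> p = p2" and negative: "\<forall>p. p1 < p \<and> p < p2 \<longrightarrow> PK p < 0"
    using cubic_two_positive_roots[OF _ \<open>c > 0\<close> \<open>a > 0\<close> discriminant] \<open>\<alpha> > 0\<close> \<open>q0 > 0\<close>
    unfolding PK_def c_def by auto
  have small: "\<bar>a\<bar> + \<kappa>\<^sup>2 * d / \<Gamma> * ((E - 1 + \<alpha> * p\<^sup>2) * p) \<le> p" if "p1 < p \<and> p < p2" for p
  proof -
    have "PK p < 0" using negative that by blast
    then show ?thesis using \<open>a > 0\<close> unfolding PK_def q0_eq[symmetric]
      by (simp add: algebra_simps power2_eq_square power3_eq_cube)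
  qed
  show ?thesis
  proof (intro exI conjI allI impI ballI)
    fix p U V assume p: "p1 < p \<and> p < p2 \<and> q0 * (E - 1 + 3 * \<alpha> * p\<^sup>2) < 1"
      and U: "U \<in> closed_ball_C d p" and V: "V \<in> closed_ball_C d p"
    show "T_op a \<Gamma> \<kappa> d epsL \<alpha> U \<in> closed_ball_C d p"
      using T_op_maps_ball[OF \<open>\<Gamma> > 0\<close> \<open>d \<ge> 0\<close> \<open>continuous_on {-d..d} epsL\<close> eps _ small U]
        \<open>\<alpha> > 0\<close> p by auto
    show "supnorm d (\<lambda>z. T_op a \<Gamma> \<kappa> d epsL \<alpha> U z - T_op a \<Gamma> \<kappa> d epsL \<alpha> V z)
            \<le> q0 * (E - 1 + 3 * \<alpha> * p\<^sup>2) * supnorm d (\<lambda>z. U z - V z)"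
      using T_op_lipschitz[OF \<open>\<Gamma> > 0\<close> \<open>d \<ge> 0\<close> \<open>continuous_on {-d..d} epsL\<close> eps _ U V]
        \<open>\<alpha> > 0\<close> unfolding q0_eq by auto
  qed (use roots in auto)
qed

end
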